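(* Let $n$ and $k$ be integers with $2\le k\le n-1$, and let $G$ be a connected graph with $n$ vertices. (a) If $\chi(G)=k$, then $\sigma_0(G)\ge 2-\frac{k-1}{n}$ and $\sigma_1(G)\ge 4n-3k+3$, and equality holds in either bound if and only if $G=K_{k-1}\vee\overline{K}_{n+1-k}$. (b) If $\omega(G)=k$, then the same two bounds hold, and equality holds in either bound if and only if $G$ has exactly $k-1$ dominating vertices.
   Context: All graphs are finite, simple, undirected. For a connected graph $G$ and $u\in V(G)$, $\varepsilon_G(u)=\max_{v} d_G(u,v)$; $\sigma_0(G)=\frac1{|V(G)|}\sum_u\varepsilon_G(u)$, $\sigma_1(G)=\sum_u\varepsilon_G(u)^2$. $\chi(G)$ is the chromatic number and $\omega(G)$ the clique number. A dominating vertex is a vertex adjacent to all other vertices. $K_r$ is the complete graph, $\overline{K}_r$ the edgeless graph on $r$ vertices, and $G\vee H$ (the join) is obtained from the disjoint union of $G$ and $H$ by adding all edges between $V(G)$ and $V(H)$. *)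

theory Defs
  imports Main "HOL.Real"
begin

type_synonym 'a sgraph = "'a set \<times> ('a \<Rightarrow> 'a \<Rightarrow> bool)"

definition verts :: "'a sgraph \<Rightarrow> 'a set" where "verts G = fst G"
definition adj :: "'a sgraph \<Rightarrow> 'a \<Rightarrow> 'a \<Rightarrow> bool" where "adj G = snd G"

definition simple_graph :: "'a sgraph \<Rightarrow> bool" where
  "simple_graph G \<longleftrightarrow> finite (verts G) \<and>
     (\<forall>u v. adj G u v \<longrightarrow> u \<in> verts G \<and> v \<in> verts G \<and> u \<noteq> v) \<and>
     (\<forall>u v. adj G u v \<longrightarrow> adj G v u)"

definition walk :: "'a sgraph \<Rightarrow> 'a list \<Rightarrow> bool" where
  "walk G xs \<longleftrightarrow> xs \<noteq> [] \<and> set xs \<subseteq> verts G \<and>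
     (\<forall>i. i + 1 < length xs \<longrightarrow> adj G (xs ! i) (xs ! (i + 1)))"

definition connected_graph :: "'a sgraph \<Rightarrow> bool" where
  "connected_graph G \<longleftrightarrow> verts G \<noteq> {} \<and>
     (\<forall>u\<in>verts G. \<forall>v\<in>verts G. \<exists>xs. walk G xs \<and> hd xs = u \<and> last xs = v)"

definition dist :: "'a sgraph \<Rightarrow> 'a \<Rightarrow> 'a \<Rightarrow> nat" where
  "dist G u v = (LEAST m. \<exists>xs. walk G xs \<and> hd xs = u \<and> last xs = v \<and> length xs = m + 1)"

definition ecc :: "'a sgraph \<Rightarrow> 'a \<Rightarrow> nat" where
  "ecc G u = Max ((\<lambda>v. dist G u v) ` verts G)"

definition sigma0 :: "'a sgraph \<Rightarrow> real" where
  "sigma0 G = (\<Sum>u\<in>verts G. real (ecc G u)) / real (card (verts G))"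

definition sigma1 :: "'a sgraph \<Rightarrow> nat" where
  "sigma1 G = (\<Sum>u\<in>verts G. (ecc G u)^2)"

definition proper_colouring :: "'a sgraph \<Rightarrow> nat \<Rightarrow> ('a \<Rightarrow> nat) \<Rightarrow> bool" where
  "proper_colouring G k c \<longleftrightarrow> c ` verts G \<subseteq> {0..<k} \<and>
     (\<forall>u\<in>verts G. \<forall>v\<in>verts G. adj G u v \<longrightarrow> c u \<noteq> c v)"

definition chromatic_number :: "'a sgraph \<Rightarrow> nat" where
  "chromatic_number G = (LEAST k. \<exists>c. proper_colouring G k c)"

definition is_clique :: "'a sgraph \<Rightarrow> 'a set \<Rightarrow> bool" where
  "is_clique G S \<longleftrightarrow> S \<subseteq> verts G \<and> (\<forall>u\<in>S. \<forall>v\<in>S. u \<noteq> v \<longrightarrow> adj G u v)"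

definition clique_number :: "'a sgraph \<Rightarrow> nat" where
  "clique_number G = Max {card S | S. is_clique G S}"

definition dominating_vertex :: "'a sgraph \<Rightarrow> 'a \<Rightarrow> bool" where
  "dominating_vertex G v \<longleftrightarrow> v \<in> verts G \<and> (\<forall>u\<in>verts G. u \<noteq> v \<longrightarrow> adj G v u)"

definition complete_graph :: "nat \<Rightarrow> nat sgraph" where
  "complete_graph r = ({0..<r}, \<lambda>u v. u < r \<and> v < r \<and> u \<noteq> v)"

definition edgeless_graph :: "nat \<Rightarrow> nat sgraph" where
  "edgeless_graph r = ({0..<r}, \<lambda>u v. False)"

definition graph_join :: "'a sgraph \<Rightarrow> 'b sgraph \<Rightarrow> ('a + 'b) sgraph" where
  "graph_join G H = (Inl ` verts G \<union> Inr ` verts H,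
     \<lambda>x y. case (x, y) of
        (Inl a, Inl b) \<Rightarrow> adj G a b
      | (Inr a, Inr b) \<Rightarrow> adj H a b
      | (Inl a, Inr b) \<Rightarrow> a \<in> verts G \<and> b \<in> verts H
      | (Inr a, Inl b) \<Rightarrow> a \<in> verts H \<and> b \<in> verts G)"

definition graph_iso :: "'a sgraph \<Rightarrow> 'b sgraph \<Rightarrow> bool" where
  "graph_iso G H \<longleftrightarrow> (\<exists>f. bij_betw f (verts G) (verts H) \<and>
     (\<forall>u\<in>verts G. \<forall>v\<in>verts G. adj G u v \<longleftrightarrow> adj H (f u) (f v)))"

end

(* A dominating vertex has eccentricity 1, any other vertex eccentricity at least 2, and exactly 2
   as soon as some dominating vertex exists. So with d dominating vertices
   sum eps >= 2n - d and sum eps^2 >= 4n - 3d, with equality once d > 0. Since k < n, G is not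
   complete, and a non-dominating vertex together with all dominating vertices is a clique;
   hence d <= omega - 1 <= chi - 1, which gives both bounds, tight exactly when d = k - 1.
   If chi = k and d = k - 1, two adjacent non-dominating vertices would extend the dominating
   vertices to a clique of size k + 1, so the non-dominating vertices are independent and
   G is K_(k-1) joined with the edgeless graph on the remaining n + 1 - k vertices. *)

theory Submission
  imports Defs
begin

lemma simple_graph_finite: "simple_graph G \<Longrightarrow> finite (verts G)"
  unfolding simple_graph_def by blast

lemma simple_graph_sym: "simple_graph G \<Longrightarrow> adj G u v \<Longrightarrow> adj G v u"
  unfolding simple_graph_def by blast

lemma simple_graph_adj_neq: "simple_graph G \<Longrightarrow> adj G u v \<Longrightarrow> u \<noteq> v"
  unfolding simple_graph_def by blast

lemma simple_graph_adj_verts: "simple_graph G \<Longrightarrow> adj G u v \<Longrightarrow> u \<in> verts G \<and> v \<in> verts G"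
  unfolding simple_graph_def by blast

lemma dist_le_length:
  assumes "walk G xs"
  shows "dist G (hd xs) (last xs) \<le> length xs - 1"
proof -
  have "\<exists>ys. walk G ys \<and> hd ys = hd xs \<and> last ys = last xs \<and> length ys = (length xs - 1) + 1"
    using assms by (intro exI[of _ xs]) (auto simp: walk_def)
  then show ?thesis unfolding dist_def by (rule Least_le)
qed

lemma dist_self: "u \<in> verts G \<Longrightarrow> dist G u u = 0"
  using dist_le_length[of G "[u]"] by (simp add: walk_def)

lemma dist_adj_le:
  "simple_graph G \<Longrightarrow> adj G u v \<Longrightarrow> dist G u v \<le> 1"
  using dist_le_length[of G "[u, v]"]
  by (simp add: walk_def less_Suc_eq simple_graph_adj_verts)

lemma dist_adj_adj_le:
  "simple_graph G \<Longrightarrow> adj G u w \<Longrightarrow> adj G w v \<Longrightarrow> dist G u v \<le> 2"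
  using dist_le_length[of G "[u, w, v]"]
  by (simp add: walk_def less_Suc_eq simple_graph_adj_verts)

lemma shortest_walk_exists:
  assumes "connected_graph G" "u \<in> verts G" "v \<in> verts G"
  obtains xs where "walk G xs" "hd xs = u" "last xs = v" "length xs = dist G u v + 1"
proof -
  obtain xs where xs: "walk G xs" "hd xs = u" "last xs = v"
    using assms unfolding connected_graph_def by blast
  then have "\<exists>m ys. walk G ys \<and> hd ys = u \<and> last ys = v \<and> length ys = m + 1"
    by (intro exI[of _ "length xs - 1"] exI[of _ xs]) (auto simp: walk_def)
  then have "\<exists>ys. walk G ys \<and> hd ys = u \<and> last ys = v \<and> length ys = dist G u v + 1"
    unfolding dist_def by (rule LeastI_ex)
  with that show ?thesis by blast
qed

lemma dist_le_1_imp_eq_or_adj: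
  assumes "connected_graph G" "u \<in> verts G" "v \<in> verts G" "dist G u v \<le> 1"
  shows "u = v \<or> adj G u v"
proof -
  obtain xs where xs: "walk G xs" "hd xs = u" "last xs = v" "length xs = dist G u v + 1"
    using shortest_walk_exists[OF assms(1-3)] .
  then have "length xs = 1 \<or> length xs = 2" using assms(4) by auto
  then consider a where "xs = [a]" | a b where "xs = [a, b]"
    by (auto simp: length_Suc_conv numeral_2_eq_2)
  then show ?thesis
    by cases (use xs in \<open>auto simp: walk_def\<close>)
qed

lemma dist_eq_0_imp_eq:
  assumes "connected_graph G" "u \<in> verts G" "v \<in> verts G" "dist G u v = 0"
  shows "u = v"
proof -
  obtain xs where "walk G xs" "hd xs = u" "last xs = v" "length xs = 1"
    using shortest_walk_exists[OF assms(1-3)] assms(4) by auto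
  then show ?thesis by (cases xs) auto
qed

lemma dist_le_ecc: "simple_graph G \<Longrightarrow> v \<in> verts G \<Longrightarrow> dist G u v \<le> ecc G u"
  unfolding ecc_def by (auto intro: Max_ge simple_graph_finite)

lemma ecc_leI:
  "simple_graph G \<Longrightarrow> u \<in> verts G \<Longrightarrow> (\<And>v. v \<in> verts G \<Longrightarrow> dist G u v \<le> b) \<Longrightarrow> ecc G u \<le> b"
  unfolding ecc_def by (subst Max_le_iff) (auto simp: simple_graph_finite)

lemma ecc_dominating:
  assumes "simple_graph G" "connected_graph G" "2 \<le> card (verts G)" "dominating_vertex G u"
  shows "ecc G u = 1"
proof (rule antisym)
  have u: "u \<in> verts G" using assms(4) by (simp add: dominating_vertex_def)
  show "ecc G u \<le> 1"
  proof (rule ecc_leI[OF assms(1) u])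
    fix v assume "v \<in> verts G"
    then show "dist G u v \<le> 1"
      using assms(1,4) u dist_adj_le[OF assms(1), of u v]
      by (cases "v = u") (auto simp: dominating_vertex_def dist_self)
  qed
  have "\<not> verts G \<subseteq> {u}" using assms(3) card_mono[of "{u}" "verts G"] by auto
  then obtain v where v: "v \<in> verts G" "v \<noteq> u" by blast
  then have "dist G u v \<noteq> 0" using dist_eq_0_imp_eq[OF assms(2) u] by blast
  then show "1 \<le> ecc G u" using dist_le_ecc[OF assms(1) v(1), of u] by linarith
qed

lemma ecc_not_dominating:
  assumes "simple_graph G" "connected_graph G" "u \<in> verts G" "\<not> dominating_vertex G u"
  shows "2 \<le> ecc G u"
proof -
  obtain v where v: "v \<in> verts G" "v \<noteq> u" "\<not> adj G u v"
    using assms(3,4) by (auto simp: dominating_vertex_def)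
  then have "\<not> dist G u v \<le> 1" using dist_le_1_imp_eq_or_adj[OF assms(2,3) v(1)] by auto
  then show ?thesis using dist_le_ecc[OF assms(1) v(1), of u] by linarith
qed

lemma ecc_le_2_if_dominating_vertex:
  assumes "simple_graph G" "dominating_vertex G w" "u \<in> verts G"
  shows "ecc G u \<le> 2"
proof (rule ecc_leI[OF assms(1,3)])
  fix v assume v: "v \<in> verts G"
  have w: "\<And>x. x \<in> verts G \<Longrightarrow> x \<noteq> w \<Longrightarrow> adj G w x"
    using assms(2) by (auto simp: dominating_vertex_def)
  consider "u = v" | "u \<noteq> v" "u = w \<or> v = w" | "u \<noteq> w" "v \<noteq> w"
    by blast
  then show "dist G u v \<le> 2"
  proof cases
    case 1
    then show ?thesis using assms(3) by (simp add: dist_self)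
  next
    case 2
    then have "adj G u v"
      using w[OF v] w[OF assms(3)] simple_graph_sym[OF assms(1)] by auto
    then show ?thesis using dist_adj_le[OF assms(1)] by fastforce
  next
    case 3
    then have "adj G u w" "adj G w v"
      using w[OF v] w[OF assms(3)] simple_graph_sym[OF assms(1)] by auto
    then show ?thesis by (rule dist_adj_adj_le[OF assms(1)])
  qed
qed

lemma sum_if_const:
  "finite A \<Longrightarrow> (\<Sum>x\<in>A. if P x then a else b) = a * card {x\<in>A. P x} + b * card {x\<in>A. \<not> P x}"
  for a b :: nat
  by (simp add: sum.If_cases Int_def set_diff_eq)

lemma ecc_ge_dominating_indicator:
  assumes "simple_graph G" "connected_graph G" "2 \<le> card (verts G)" "u \<in> verts G"
  shows "(if dominating_vertex G u then 1 else 2) \<le> ecc G u"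
  using ecc_dominating[OF assms(1-3)] ecc_not_dominating[OF assms(1,2,4)] by simp

lemma ecc_eq_dominating_indicator:
  assumes "simple_graph G" "connected_graph G" "2 \<le> card (verts G)"
    and "dominating_vertex G w" "u \<in> verts G"
  shows "ecc G u = (if dominating_vertex G u then 1 else 2)"
  using ecc_ge_dominating_indicator[OF assms(1-3,5)] ecc_le_2_if_dominating_vertex[OF assms(1,4,5)]
    ecc_dominating[OF assms(1-3)] by (auto split: if_splits)

lemma sum_ecc_bounds:
  assumes sg: "simple_graph G" and cg: "connected_graph G" and n2: "2 \<le> card (verts G)"
  defines "n \<equiv> card (verts G)" and "d \<equiv> card {v. dominating_vertex G v}"
  shows "2 * n \<le> (\<Sum>u\<in>verts G. ecc G u) + d"
    and "4 * n \<le> sigma1 G + 3 * d"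
    and "0 < d \<Longrightarrow> (\<Sum>u\<in>verts G. ecc G u) + d = 2 * n"
    and "0 < d \<Longrightarrow> sigma1 G + 3 * d = 4 * n"
proof -
  define V where "V = verts G"
  define lb where "lb u = (if dominating_vertex G u then 1 else 2 :: nat)" for u
  have fin: "finite V" using sg by (simp add: V_def simple_graph_finite)
  have DV: "{v. dominating_vertex G v} \<subseteq> V" by (auto simp: V_def dominating_vertex_def)
  have D: "{u\<in>V. dominating_vertex G u} = {v. dominating_vertex G v}" using DV by blast
  have dn: "d \<le> n" unfolding d_def n_def V_def[symmetric] using card_mono[OF fin DV] .
  have "{u\<in>V. \<not> dominating_vertex G u} = V - {v. dominating_vertex G v}" by blast
  then have cardND: "card {u\<in>V. \<not> dominating_vertex G u} = n - d"
    using card_Diff_subset[OF finite_subset[OF DV fin] DV] by (simp add: n_def d_def V_def)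
  have lb2: "(lb u)^2 = (if dominating_vertex G u then 1 else 4)" for u
    by (simp add: lb_def)
  have sum_lb: "(\<Sum>u\<in>V. lb u) = d + 2 * (n - d)"
    using sum_if_const[OF fin, of "dominating_vertex G"] unfolding lb_def D cardND d_def by simp
  have sum_lb2: "(\<Sum>u\<in>V. (lb u)^2) = d + 4 * (n - d)"
    unfolding lb2 using sum_if_const[OF fin, of "dominating_vertex G"] unfolding D cardND d_def by simp
  have lb_le: "lb u \<le> ecc G u" if "u \<in> V" for u
    using ecc_ge_dominating_indicator[OF sg cg n2] that by (simp add: lb_def V_def)
  have "(\<Sum>u\<in>V. lb u) \<le> (\<Sum>u\<in>V. ecc G u)" by (rule sum_mono) (rule lb_le)
  then show "2 * n \<le> (\<Sum>u\<in>verts G. ecc G u) + d" using sum_lb dn by (simp add: V_def)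
  have "(\<Sum>u\<in>V. (lb u)^2) \<le> sigma1 G"
    unfolding sigma1_def V_def[symmetric] by (intro sum_mono power_mono lb_le) auto
  then show "4 * n \<le> sigma1 G + 3 * d" using sum_lb2 dn by simp
  assume "0 < d"
  then obtain w where "dominating_vertex G w"
    using card_gt_0_iff[of "{v. dominating_vertex G v}"] unfolding d_def by auto
  then have "lb u = ecc G u" if "u \<in> V" for u
    using ecc_eq_dominating_indicator[OF sg cg n2] that by (simp add: lb_def V_def)
  then have "(\<Sum>u\<in>V. lb u) = (\<Sum>u\<in>V. ecc G u)" "(\<Sum>u\<in>V. (lb u)^2) = sigma1 G"
    unfolding sigma1_def V_def[symmetric] by auto
  then show "(\<Sum>u\<in>verts G. ecc G u) + d = 2 * n" "sigma1 G + 3 * d = 4 * n"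
    using sum_lb sum_lb2 dn by (simp_all add: V_def)
qed

lemma add_mult_bound_eq_iff:
  fixes x d m c K :: nat
  assumes "m \<le> x + c * d" "d \<le> K" "0 < c" "d = K \<Longrightarrow> x + c * d = m"
  shows "m \<le> x + c * K" and "x + c * K = m \<longleftrightarrow> d = K"
proof -
  have "d < K \<Longrightarrow> m < x + c * K"
    using assms(1) mult_strict_left_mono[OF _ assms(3), of d K] by linarith
  then show "m \<le> x + c * K" "x + c * K = m \<longleftrightarrow> d = K"
    using assms(2,4) by (auto simp: le_less)
qed

lemma sigma_bounds_dominating:
  assumes sg: "simple_graph G" and cg: "connected_graph G" and n: "card (verts G) = n"
    and n2: "2 \<le> n" and k2: "2 \<le> k" and dk: "card {v. dominating_vertex G v} < k"
  shows "sigma0 G \<ge> 2 - (real k - 1) / real n \<and>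
         int (sigma1 G) \<ge> 4 * int n - 3 * int k + 3 \<and>
         (sigma0 G = 2 - (real k - 1) / real n \<longleftrightarrow> card {v. dominating_vertex G v} = k - 1) \<and>
         (int (sigma1 G) = 4 * int n - 3 * int k + 3 \<longleftrightarrow> card {v. dominating_vertex G v} = k - 1)"
proof -
  define d where "d = card {v. dominating_vertex G v}"
  define S where "S = (\<Sum>u\<in>verts G. ecc G u)"
  have pos: "d = k - 1 \<Longrightarrow> 0 < d" using k2 by simp
  note bounds = sum_ecc_bounds[OF sg cg, unfolded n d_def[symmetric] S_def[symmetric]]
  have ecc_sum: "2 * n \<le> S + 1 * (k - 1)" "S + 1 * (k - 1) = 2 * n \<longleftrightarrow> d = k - 1"
    using add_mult_bound_eq_iff[of "2 * n" S 1 d "k - 1"] bounds(1,3) pos dk n2 unfolding d_def by auto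
  have ecc_sq_sum: "4 * n \<le> sigma1 G + 3 * (k - 1)" "sigma1 G + 3 * (k - 1) = 4 * n \<longleftrightarrow> d = k - 1"
    using add_mult_bound_eq_iff[of "4 * n" "sigma1 G" 3 d "k - 1"] bounds(2,4) pos dk n2 unfolding d_def by auto
  have k1: "real (k - 1) = real k - 1" "int (k - 1) = int k - 1" using k2 by (simp_all add: of_nat_diff)
  have "2 - (real k - 1) / real n = (real (2 * n) - real (k - 1)) / real n"
    using n2 k1 by (simp add: field_simps)
  moreover have "sigma0 G = real S / real n" by (simp add: sigma0_def S_def n)
  moreover have "real (2 * n) - real (k - 1) \<le> real S" using ecc_sum(1) by linarith
  moreover have "real S = real (2 * n) - real (k - 1) \<longleftrightarrow> d = k - 1"
    using ecc_sum(2) by linarith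
  ultimately have "sigma0 G \<ge> 2 - (real k - 1) / real n"
      "sigma0 G = 2 - (real k - 1) / real n \<longleftrightarrow> d = k - 1"
    using n2 by (simp_all add: divide_right_mono)
  moreover have "int (sigma1 G) \<ge> 4 * int n - 3 * int k + 3"
      "int (sigma1 G) = 4 * int n - 3 * int k + 3 \<longleftrightarrow> d = k - 1"
    using ecc_sq_sum k1(2) by linarith+
  ultimately show ?thesis unfolding d_def by blast
qed

lemma card_clique_le_clique_number:
  assumes "simple_graph G" "is_clique G S"
  shows "card S \<le> clique_number G"
proof -
  have "{card S |S. is_clique G S} \<subseteq> card ` Pow (verts G)"
    unfolding is_clique_def by blast
  then have "finite {card S |S. is_clique G S}"
    by (rule finite_subset) (simp add: simple_graph_finite[OF assms(1)])
  then show ?thesis unfolding clique_number_def using assms(2) by (auto intro: Max_ge)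
qed

lemma ex_colouring_chromatic_number:
  assumes "simple_graph G"
  shows "\<exists>c. proper_colouring G (chromatic_number G) c"
proof -
  obtain h where h: "bij_betw h (verts G) {0..<card (verts G)}"
    using ex_bij_betw_finite_nat[OF simple_graph_finite[OF assms]] by blast
  have "proper_colouring G (card (verts G)) h"
    using h simple_graph_adj_neq[OF assms]
    unfolding proper_colouring_def bij_betw_def inj_on_def by blast
  then have "\<exists>k c. proper_colouring G k c" by blast
  then show ?thesis unfolding chromatic_number_def by (rule LeastI_ex)
qed

lemma card_clique_le_chromatic_number:
  assumes "simple_graph G" "is_clique G S"
  shows "card S \<le> chromatic_number G"
proof -
  obtain c where c: "proper_colouring G (chromatic_number G) c"
    using ex_colouring_chromatic_number[OF assms(1)] by blast
  have "inj_on c S"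
  proof (rule inj_onI, rule ccontr)
    fix u v assume "u \<in> S" "v \<in> S" "c u = c v" "u \<noteq> v"
    then have "adj G u v" "u \<in> verts G" "v \<in> verts G" using assms(2) by (auto simp: is_clique_def)
    with \<open>c u = c v\<close> show False using c by (simp add: proper_colouring_def)
  qed
  moreover have "c ` S \<subseteq> {0..<chromatic_number G}"
    using c assms(2) unfolding proper_colouring_def is_clique_def by blast
  ultimately show ?thesis using card_inj_on_le[of c S "{0..<chromatic_number G}"] by simp
qed

lemma is_clique_Un_dominating:
  assumes "simple_graph G" "is_clique G S"
  shows "is_clique G (S \<union> {v. dominating_vertex G v})"
  unfolding is_clique_def
proof (intro conjI ballI impI)
  show "S \<union> {v. dominating_vertex G v} \<subseteq> verts G"
    using assms(2) by (auto simp: is_clique_def dominating_vertex_def)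
  then have verts: "u \<in> S \<union> {v. dominating_vertex G v} \<Longrightarrow> u \<in> verts G" for u by blast
  fix u v assume u: "u \<in> S \<union> {v. dominating_vertex G v}" and v: "v \<in> S \<union> {v. dominating_vertex G v}"
    and "u \<noteq> v"
  then consider "u \<in> S" "v \<in> S" | "dominating_vertex G u" | "dominating_vertex G v" by blast
  then show "adj G u v"
  proof cases
    case 1
    then show ?thesis using assms(2) \<open>u \<noteq> v\<close> by (simp add: is_clique_def)
  next
    case 2
    then show ?thesis using verts[OF v] \<open>u \<noteq> v\<close> by (simp add: dominating_vertex_def)
  next
    case 3
    then have "adj G v u" using verts[OF u] \<open>u \<noteq> v\<close> by (simp add: dominating_vertex_def)
    then show ?thesis by (rule simple_graph_sym[OF assms(1)])
  qed
qed

lemma card_dominating_less: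
  assumes sg: "simple_graph G" and cl: "\<And>S. is_clique G S \<Longrightarrow> card S \<le> k"
    and kn: "k < card (verts G)"
  shows "card {v. dominating_vertex G v} < k"
proof -
  define D where "D = {v. dominating_vertex G v}"
  have "D \<subseteq> verts G" by (auto simp: D_def dominating_vertex_def)
  then have finD: "finite D" using simple_graph_finite[OF sg] by (rule finite_subset)
  have "\<not> is_clique G (verts G)" using cl kn by fastforce
  then obtain x y where "x \<in> verts G" "y \<in> verts G" "x \<noteq> y" "\<not> adj G x y"
    by (auto simp: is_clique_def)
  then have x: "x \<in> verts G" "x \<notin> D" by (auto simp: D_def dominating_vertex_def)
  then have "is_clique G ({x} \<union> D)"
    using is_clique_Un_dominating[OF sg, of "{x}"] by (simp add: D_def is_clique_def)
  then have "card ({x} \<union> D) \<le> k" by (rule cl)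
  then show ?thesis using finD x(2) by (simp add: D_def)
qed

lemma verts_graph_join: "verts (graph_join G H) = Inl ` verts G \<union> Inr ` verts H"
  by (simp add: graph_join_def verts_def)

lemma adj_graph_join [simp]:
  "adj (graph_join G H) (Inl a) (Inl b) = adj G a b"
  "adj (graph_join G H) (Inr x) (Inr y) = adj H x y"
  "adj (graph_join G H) (Inl a) (Inr y) = (a \<in> verts G \<and> y \<in> verts H)"
  "adj (graph_join G H) (Inr x) (Inl b) = (x \<in> verts H \<and> b \<in> verts G)"
  by (simp_all add: graph_join_def adj_def verts_def)

lemma verts_complete_graph [simp]: "verts (complete_graph r) = {0..<r}"
  and adj_complete_graph [simp]: "adj (complete_graph r) u v = (u < r \<and> v < r \<and> u \<noteq> v)"
  by (simp_all add: complete_graph_def verts_def adj_def)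

lemma verts_edgeless_graph [simp]: "verts (edgeless_graph r) = {0..<r}"
  and adj_edgeless_graph [simp]: "\<not> adj (edgeless_graph r) u v"
  by (simp_all add: edgeless_graph_def verts_def adj_def)

(* For b = 1 the single vertex of the edgeless side would be dominating as well. *)
lemma dominating_join_complete_edgeless:
  assumes "2 \<le> b"
  shows "{v. dominating_vertex (graph_join (complete_graph a) (edgeless_graph b)) v} = Inl ` {0..<a}"
    (is "{v. dominating_vertex ?J v} = _")
proof (intro set_eqI iffI)
  fix x assume x: "x \<in> {v. dominating_vertex ?J v}"
  show "x \<in> Inl ` {0..<a}"
  proof (cases x)
    case (Inl i)
    then show ?thesis using x by (auto simp: dominating_vertex_def verts_graph_join)
  next
    case (Inr j)
    define j' where "j' = (if j = 0 then 1 else 0 :: nat)"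
    have "Inr j' \<in> verts ?J" "Inr j' \<noteq> x"
      using assms Inr by (auto simp: j'_def verts_graph_join)
    then have "adj ?J x (Inr j')" using x by (auto simp: dominating_vertex_def)
    then show ?thesis using Inr by simp
  qed
next
  fix x :: "nat + nat" assume "x \<in> Inl ` {0..<a}"
  then show "x \<in> {v. dominating_vertex ?J v}"
    by (auto simp: dominating_vertex_def verts_graph_join)
qed

lemma graph_iso_card_dominating:
  assumes "graph_iso G H"
  shows "card {v. dominating_vertex G v} = card {v. dominating_vertex H v}"
proof -
  obtain f where bij: "bij_betw f (verts G) (verts H)"
    and adj: "\<And>u v. u \<in> verts G \<Longrightarrow> v \<in> verts G \<Longrightarrow> adj G u v \<longleftrightarrow> adj H (f u) (f v)"
    using assms unfolding graph_iso_def by blast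
  have dom_iff: "dominating_vertex G u \<longleftrightarrow> dominating_vertex H (f u)" if u: "u \<in> verts G" for u
  proof -
    have "(\<forall>w\<in>verts G. w \<noteq> u \<longrightarrow> adj G u w) \<longleftrightarrow> (\<forall>w\<in>verts G. f w \<noteq> f u \<longrightarrow> adj H (f u) (f w))"
      using u adj bij_betw_imp_inj_on[OF bij] by (auto dest: inj_onD)
    then show ?thesis
      using u unfolding dominating_vertex_def bij_betw_imp_surj_on[OF bij, symmetric] by auto
  qed
  have DG: "{v. dominating_vertex G v} = {u\<in>verts G. dominating_vertex H (f u)}"
    using dom_iff by (auto simp: dominating_vertex_def)
  have "f ` {u\<in>verts G. dominating_vertex H (f u)} = {v. dominating_vertex H v}"
    using bij_betw_imp_surj_on[OF bij] by (force simp: dominating_vertex_def)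
  then have "bij_betw f {v. dominating_vertex G v} {v. dominating_vertex H v}"
    unfolding DG by (rule bij_betw_subset[OF bij, rotated]) blast
  then show ?thesis by (rule bij_betw_same_card)
qed

lemma graph_iso_join_complete_edgeless:
  assumes sg: "simple_graph G" and cV: "card (verts G) = a + b"
    and cD: "card {v. dominating_vertex G v} = a"
    and indep: "\<And>x y. x \<in> verts G \<Longrightarrow> y \<in> verts G \<Longrightarrow> \<not> dominating_vertex G x \<Longrightarrow>
                 \<not> dominating_vertex G y \<Longrightarrow> \<not> adj G x y"
  shows "graph_iso G (graph_join (complete_graph a) (edgeless_graph b))"
proof -
  define V where "V = verts G"
  define D where "D = {v. dominating_vertex G v}"
  have DV: "D \<subseteq> V" by (auto simp: D_def V_def dominating_vertex_def)
  have finD: "finite D" using finite_subset[OF DV] sg by (simp add: V_def simple_graph_finite)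
  have "card (V - D) = b" using card_Diff_subset[OF finD DV] cV cD by (simp add: V_def D_def)
  then obtain h where h: "bij_betw h (V - D) {0..<b}"
    using ex_bij_betw_finite_nat[of "V - D"] sg by (auto simp: V_def simple_graph_finite)
  obtain g where g: "bij_betw g D {0..<a}"
    using ex_bij_betw_finite_nat[OF finD] cD by (auto simp: D_def)
  define f where "f x = (if x \<in> D then Inl (g x) else Inr (h x))" for x
  have "bij_betw (\<lambda>x. Inl (g x)) D (Inl ` {0..<a})"
    by (rule bij_betw_trans[OF g, unfolded comp_def]) (simp add: bij_betw_def)
  moreover have "bij_betw (\<lambda>x. Inr (h x)) (V - D) (Inr ` {0..<b})"
    by (rule bij_betw_trans[OF h, unfolded comp_def]) (simp add: bij_betw_def)
  ultimately have "bij_betw f (D \<union> (V - D)) (Inl ` {0..<a} \<union> Inr ` {0..<b})"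
    unfolding f_def by (rule bij_betw_disjoint_Un) auto
  then have bij: "bij_betw f V (Inl ` {0..<a} \<union> Inr ` {0..<b})"
    using DV by (simp add: Un_absorb1)
  have adj_dom: "u \<in> D \<Longrightarrow> v \<in> V \<Longrightarrow> adj G u v \<longleftrightarrow> u \<noteq> v" for u v
    using simple_graph_adj_neq[OF sg] by (auto simp: D_def V_def dominating_vertex_def)
  have "adj G u v \<longleftrightarrow> adj (graph_join (complete_graph a) (edgeless_graph b)) (f u) (f v)"
    if "u \<in> V" "v \<in> V" for u v
    using that bij_betwE[OF g] bij_betwE[OF h] bij_betw_imp_inj_on[OF g] adj_dom[of u v] adj_dom[of v u]
      simple_graph_sym[OF sg, of v u] indep[of u v]
    by (auto simp: f_def D_def V_def dest: inj_onD)
  with bij show ?thesis unfolding graph_iso_def by (auto simp: V_def verts_graph_join)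
qed

lemma card_dominating_eq_iff_graph_iso:
  assumes sg: "simple_graph G" and n: "card (verts G) = n" and chi: "chromatic_number G = k"
    and k: "1 \<le> k" "k + 1 \<le> n"
  shows "card {v. dominating_vertex G v} = k - 1 \<longleftrightarrow>
         graph_iso G (graph_join (complete_graph (k - 1)) (edgeless_graph (n + 1 - k)))"
proof
  assume dk: "card {v. dominating_vertex G v} = k - 1"
  show "graph_iso G (graph_join (complete_graph (k - 1)) (edgeless_graph (n + 1 - k)))"
  proof (rule graph_iso_join_complete_edgeless[OF sg _ dk])
    show "card (verts G) = k - 1 + (n + 1 - k)" using n k by simp
    fix x y assume x: "x \<in> verts G" "\<not> dominating_vertex G x"
      and y: "y \<in> verts G" "\<not> dominating_vertex G y"
    show "\<not> adj G x y"
    proof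
      assume xy: "adj G x y"
      then have clique: "is_clique G {x, y}"
        using x y simple_graph_sym[OF sg] by (auto simp: is_clique_def)
      then have "card ({x, y} \<union> {v. dominating_vertex G v}) \<le> k"
        using card_clique_le_chromatic_number[OF sg is_clique_Un_dominating[OF sg clique]] chi by simp
      moreover have "finite {v. dominating_vertex G v}"
        using finite_subset[OF _ simple_graph_finite[OF sg]] by (auto simp: dominating_vertex_def)
      ultimately show False
        using x(2) y(2) dk k simple_graph_adj_neq[OF sg xy] by simp
    qed
  qed
next
  assume "graph_iso G (graph_join (complete_graph (k - 1)) (edgeless_graph (n + 1 - k)))"
  then have "card {v. dominating_vertex G v} =
      card {v. dominating_vertex (graph_join (complete_graph (k - 1)) (edgeless_graph (n + 1 - k))) v}"
    by (rule graph_iso_card_dominating)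
  also have "\<dots> = card (Inl ` {0..<k - 1} :: (nat + nat) set)"
    using dominating_join_complete_edgeless[of "n + 1 - k" "k - 1"] k by simp
  finally show "card {v. dominating_vertex G v} = k - 1" by (simp add: card_image)
qed

theorem theorem4p2:
  fixes G :: "'a sgraph" and n k :: nat
  assumes "simple_graph G" and "connected_graph G" and "card (verts G) = n"
    and "2 \<le> k" and "k \<le> n - 1"
  shows "(chromatic_number G = k \<longrightarrow>
            sigma0 G \<ge> 2 - (real k - 1) / real n \<and>
            int (sigma1 G) \<ge> 4 * int n - 3 * int k + 3 \<and>
            (sigma0 G = 2 - (real k - 1) / real n \<longleftrightarrow>
               graph_iso G (graph_join (complete_graph (k - 1)) (edgeless_graph (n + 1 - k)))) \<and>
            (int (sigma1 G) = 4 * int n - 3 * int k + 3 \<longleftrightarrow>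
               graph_iso G (graph_join (complete_graph (k - 1)) (edgeless_graph (n + 1 - k)))))
       \<and> (clique_number G = k \<longrightarrow>
            sigma0 G \<ge> 2 - (real k - 1) / real n \<and>
            int (sigma1 G) \<ge> 4 * int n - 3 * int k + 3 \<and>
            (sigma0 G = 2 - (real k - 1) / real n \<longleftrightarrow>
               card {v. dominating_vertex G v} = k - 1) \<and>
            (int (sigma1 G) = 4 * int n - 3 * int k + 3 \<longleftrightarrow>
               card {v. dominating_vertex G v} = k - 1))"
proof -
  have kn: "k < n" and n2: "2 \<le> n" using assms(4,5) by linarith+
  have few_dominating: "card {v. dominating_vertex G v} < k"
    if "\<And>S. is_clique G S \<Longrightarrow> card S \<le> k"
    using card_dominating_less[OF assms(1) that] kn assms(3) by simp
  have chi_case: "card {v. dominating_vertex G v} < k \<and>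
      (card {v. dominating_vertex G v} = k - 1 \<longleftrightarrow>
       graph_iso G (graph_join (complete_graph (k - 1)) (edgeless_graph (n + 1 - k))))"
    if chi: "chromatic_number G = k"
    using few_dominating card_clique_le_chromatic_number[OF assms(1)] chi
      card_dominating_eq_iff_graph_iso[OF assms(1,3) chi] assms(4) kn by auto
  have omega_case: "card {v. dominating_vertex G v} < k" if "clique_number G = k"
    using few_dominating card_clique_le_clique_number[OF assms(1)] that by blast
  show ?thesis
    using sigma_bounds_dominating[OF assms(1-3) n2 assms(4)] chi_case omega_case by blast
qed

end
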